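(* Let $\omega\in\mathbb Z\setminus\{0\}$, $\kappa=2\pi\omega$, $L^2_0=\{u\in L^2(\mathbb R/\mathbb Z):\int_0^1u=0\}$, and for $u\in L^2_0$ let $\mathscr Pu$ be the unique mean-zero primitive ($(\mathscr Pu)_s=u$, $\int_0^1\mathscr Pu=0$). Define the closure map $\mathscr C:L^2_0\to\mathbb C$, $\mathscr C(u)=\int_0^1\exp(i(\kappa s+\mathscr Pu(s)))\,ds$. If $u\in L^2_0$ satisfies $\mathscr C(u)=0$, then $D\mathscr C(u):L^2_0\to\mathbb C$, given by $D\mathscr C(u)[w]=i\int_0^1e^{i(\kappa s+\mathscr Pu(s))}\mathscr Pw(s)\,ds$, is surjective as a real-linear map onto $\mathbb C\cong\mathbb R^2$.
   Context: $\mathscr C(u)=0$ is precisely the condition that the curvature $k=\kappa+u$ reconstructs a closed unit-length curve (with tangent $e^{i(\kappa s+\mathscr Pu)}$) of turning number $\omega$. *)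

theory Defs
  imports "HOL-Analysis.Analysis"
begin

text \<open>Functions on the circle R/Z are represented by their restriction to [0,1].
  L^2_0: measurable, square-integrable, mean zero on [0,1].\<close>
definition L2_0 :: "(real \<Rightarrow> real) set" where
  "L2_0 = {u. u measurable_on {0..1} \<and> (\<lambda>s. (u s)^2) integrable_on {0..1}
              \<and> integral {0..1} u = 0}"

definition prim :: "(real \<Rightarrow> real) \<Rightarrow> real \<Rightarrow> real" where
  "prim u s = integral {0..s} u - integral {0..1} (\<lambda>t. integral {0..t} u)"

definition kappa :: "int \<Rightarrow> real" where
  "kappa \<omega> = 2 * pi * real_of_int \<omega>"

definition closure_map :: "int \<Rightarrow> (real \<Rightarrow> real) \<Rightarrow> complex" where
  "closure_map \<omega> u =
     integral {0..1} (\<lambda>s. exp (\<i> * complex_of_real (kappa \<omega> * s + prim u s)))"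

definition D_closure_map :: "int \<Rightarrow> (real \<Rightarrow> real) \<Rightarrow> (real \<Rightarrow> real) \<Rightarrow> complex" where
  "D_closure_map \<omega> u w =
     \<i> * integral {0..1} (\<lambda>s. exp (\<i> * complex_of_real (kappa \<omega> * s + prim u s))
                                  * complex_of_real (prim w s))"

end

theory Submission
  imports Defs
begin

(*
  The image T of DC(u) on continuous mean-zero test functions w is a real subspace of C, so it
  suffices that no a ~= 0 is orthogonal to T. With the unit tangent
  gamma(s) = exp (i (kappa s + Pu(s))), orthogonality to T says that G = Re (conj a * i * gamma)
  satisfies int G * Pw = 0 for all such w, and the closure condition int gamma = 0 gives
  int G = 0. Testing with w = PG and integrating by parts turns int G * PG into - int (PG)^2,
  so PG and hence G vanish: conj a * i * gamma is purely imaginary. Its imaginary part is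
  continuous and nowhere zero, hence of constant sign, contradicting int gamma = 0.
*)

lemma continuous_square_integral_eq_0_imp_eq_0:
  fixes f :: "real \<Rightarrow> real"
  assumes "continuous_on {a..b} f" "a < b" "integral {a..b} (\<lambda>t. (f t)^2) = 0" "s \<in> {a..b}"
  shows "f s = 0"
proof -
  have "continuous_on {a..b} (\<lambda>t. (f t)^2)" using assms(1) by (intro continuous_intros)
  then have "((\<lambda>t. (f t)^2) has_integral 0) (cbox a b)"
    using assms(3) by (metis box_real(2) integrable_continuous_real integrable_integral)
  then have "(f s)^2 = 0"
    using \<open>continuous_on {a..b} (\<lambda>t. (f t)^2)\<close> assms(2,4)
    by (intro has_integral_0_cbox_imp_0[of a b]) auto
  then show ?thesis by simp
qed

lemma indefinite_integral_eq_0_imp_eq_0: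
  fixes G :: "real \<Rightarrow> 'a::banach"
  assumes "continuous_on {a..b} G" "a < b" "\<And>t. t \<in> {a..b} \<Longrightarrow> integral {a..t} G = 0"
    and s: "s \<in> {a..b}"
  shows "G s = 0"
proof -
  have "((\<lambda>t. integral {a..t} G) has_vector_derivative G s) (at s within {a..b})"
    using integral_has_vector_derivative[OF assms(1) s] .
  moreover have "((\<lambda>t. integral {a..t} G) has_vector_derivative 0) (at s within {a..b})"
    by (rule has_vector_derivative_transform[of s _ _ "\<lambda>_. 0"]) (use assms in auto)
  ultimately show ?thesis
    using vector_derivative_unique_within_closed_interval[of a b s] assms(2) s by simp
qed

lemma integral_nonvanishing_neq_0:
  fixes l :: "real \<Rightarrow> real"
  assumes l: "continuous_on {a..b} l" "a < b" "\<And>x. x \<in> {a..b} \<Longrightarrow> l x \<noteq> 0"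
  shows "integral {a..b} l \<noteq> 0"
proof
  assume int_0: "integral {a..b} l = 0"
  define m where "m x = sgn (l a) * l x" for x
  have m_cont: "continuous_on {a..b} m" unfolding m_def using l(1) by (intro continuous_intros)
  have m_a: "m a > 0" using l(2) l(3)[of a] by (simp add: m_def sgn_if)
  have "0 \<le> m x" if x: "x \<in> {a..b}" for x
  proof (rule ccontr)
    assume "\<not> 0 \<le> m x"
    then obtain y where "a \<le> y" "y \<le> x" "m y = 0"
      using IVT2'[of m x 0 a] m_a x continuous_on_subset[OF m_cont, of "{a..x}"] by auto
    then show False using l(3)[of y] m_a x by (simp add: m_def sgn_if split: if_splits)
  qed
  moreover have "(m has_integral 0) (cbox a b)"
    using int_0 l(1) unfolding m_def
    by (metis box_real(2) has_integral_mult_right integrable_continuous_real integrable_integral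
        mult_zero_right)
  ultimately have "m a = 0"
    using m_cont l(2) by (intro has_integral_0_cbox_imp_0[of a b]) auto
  with m_a show False by simp
qed

lemma mean_zero_curve_not_on_line:
  fixes E :: "real \<Rightarrow> complex"
  assumes E: "continuous_on {a..b} E" "a < b" "\<And>s. s \<in> {a..b} \<Longrightarrow> E s \<noteq> 0"
      "integral {a..b} E = 0"
    and line: "\<And>s. s \<in> {a..b} \<Longrightarrow> Re (c * E s) = 0"
  shows "c = 0"
proof (rule ccontr)
  assume "c \<noteq> 0"
  then have "Im (c * E s) \<noteq> 0" if "s \<in> {a..b}" for s
    using line[OF that] E(3)[OF that]
    by (metis complex_eq_iff mult_eq_0_iff zero_complex.simps(1,2))
  moreover have "continuous_on {a..b} (\<lambda>s. Im (c * E s))"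
    using E(1) by (intro continuous_intros)
  moreover have "integral {a..b} (\<lambda>s. Im (c * E s)) = 0"
    using has_integral_Im[OF has_integral_mult_right[OF integrable_integral[OF
          integrable_continuous_real[OF E(1)]]]] E(4)
    by (simp add: integral_unique)
  ultimately show False
    using integral_nonvanishing_neq_0 E(2) by blast
qed

lemma L2_0_integrable:
  assumes "u \<in> L2_0" shows "u integrable_on {0..1}"
proof -
  have meas: "u \<in> borel_measurable (lebesgue_on {0..1})"
    using assms by (simp add: L2_0_def measurable_on_iff_borel_measurable)
  have dom: "(\<lambda>s. 1 + (u s)^2) integrable_on {0..1}"
    using assms by (auto simp: L2_0_def intro!: integrable_add)
  have "norm (u s) \<le> 1 + (u s)^2" for s
  proof (cases "\<bar>u s\<bar> \<le> 1")
    case False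
    then have "\<bar>u s\<bar> \<le> \<bar>u s\<bar> * \<bar>u s\<bar>"
      using mult_right_mono[of 1 "\<bar>u s\<bar>" "\<bar>u s\<bar>"] by simp
    then show ?thesis by (simp add: power2_eq_square abs_mult_self_eq)
  qed (simp add: add_increasing2)
  then show ?thesis
    using measurable_bounded_by_integrable_imp_integrable[OF meas dom] by auto
qed

lemma continuous_on_prim: "f integrable_on {0..1} \<Longrightarrow> continuous_on {0..1} (prim f)"
  unfolding prim_def by (intro continuous_intros indefinite_integral_continuous_1)

lemma integral_prim: "f integrable_on {0..1} \<Longrightarrow> integral {0..1} (prim f) = 0"
  unfolding prim_def
  by (subst integral_diff) (auto intro!: integrable_continuous_real indefinite_integral_continuous_1)

lemma has_real_derivative_prim:
  assumes "continuous_on {0..1} w" "t \<in> {0..1}"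
  shows "(prim w has_real_derivative w t) (at t within {0..1})"
proof -
  have "((\<lambda>s. integral {0..s} w - integral {0..1} (\<lambda>t. integral {0..t} w))
          has_vector_derivative w t - 0) (at t within {0..1})"
    by (intro derivative_intros integral_has_vector_derivative assms)
  then show ?thesis
    unfolding prim_def[abs_def] by (simp add: has_real_derivative_iff_has_vector_derivative)
qed

lemma prim_lincomb:
  assumes "w1 integrable_on {0..1}" "w2 integrable_on {0..1}" "s \<in> {0..1}"
  shows "prim (\<lambda>x. a * w1 x + b * w2 x) s = a * prim w1 s + b * prim w2 s"
proof -
  have lin: "integral {0..t} (\<lambda>x. a * w1 x + b * w2 x)
      = a * integral {0..t} w1 + b * integral {0..t} w2" if "t \<in> {0..1}" for t
  proof -
    have "w1 integrable_on {0..t}" "w2 integrable_on {0..t}"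
      using assms(1,2) that by (auto intro: integrable_subinterval_real)
    then show ?thesis by (subst integral_add) (auto intro: integrable_on_mult_right)
  qed
  have prims_integrable:
      "(\<lambda>t. integral {0..t} w1) integrable_on {0..1}" "(\<lambda>t. integral {0..t} w2) integrable_on {0..1}"
    using assms(1,2) by (auto intro!: integrable_continuous_real indefinite_integral_continuous_1)
  have "integral {0..1} (\<lambda>t. integral {0..t} (\<lambda>x. a * w1 x + b * w2 x))
      = integral {0..1} (\<lambda>t. a * integral {0..t} w1 + b * integral {0..t} w2)"
    by (rule integral_cong) (use lin in auto)
  also have "\<dots> = a * integral {0..1} (\<lambda>t. integral {0..t} w1)
      + b * integral {0..1} (\<lambda>t. integral {0..t} w2)"
    using prims_integrable by (subst integral_add) (auto intro: integrable_on_mult_right)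
  finally show ?thesis
    using lin[OF assms(3)] by (simp add: prim_def algebra_simps)
qed

lemma integral_mult_prim_by_parts:
  assumes G: "continuous_on {0..1} G" "integral {0..1} G = 0" and w: "continuous_on {0..1} w"
  shows "integral {0..1} (\<lambda>t. G t * prim w t)
    = - integral {0..1} (\<lambda>t. integral {0..t} G * w t)"
proof -
  let ?\<Gamma> = "\<lambda>t. integral {0..t} G"
  have "((\<lambda>t. G t * prim w t + ?\<Gamma> t * w t)
          has_integral ?\<Gamma> 1 * prim w 1 - ?\<Gamma> 0 * prim w 0) {0..1}"
  proof (rule fundamental_theorem_of_calculus)
    fix t :: real assume t: "t \<in> {0..1}"
    have "(?\<Gamma> has_real_derivative G t) (at t within {0..1})"
      using integral_has_vector_derivative[OF G(1) t]
      by (simp add: has_real_derivative_iff_has_vector_derivative)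
    from DERIV_mult[OF this has_real_derivative_prim[OF w t]]
    show "((\<lambda>t. ?\<Gamma> t * prim w t) has_vector_derivative G t * prim w t + ?\<Gamma> t * w t)
        (at t within {0..1})"
      by (simp add: has_real_derivative_iff_has_vector_derivative algebra_simps)
  qed simp
  then have "integral {0..1} (\<lambda>t. G t * prim w t + ?\<Gamma> t * w t) = 0"
    using G(2) by (simp add: integral_unique)
  moreover have "continuous_on {0..1} (prim w)" "continuous_on {0..1} ?\<Gamma>"
    using G(1) w by (auto intro!: continuous_on_prim integrable_continuous_real
        indefinite_integral_continuous_1)
  ultimately show ?thesis
    using G(1) w
    by (subst (asm) integral_add) (auto intro!: integrable_continuous_real continuous_intros)
qed

definition continuous_mean_zero :: "(real \<Rightarrow> real) set" where
  "continuous_mean_zero = {w. continuous_on {0..1} w \<and> integral {0..1} w = 0}"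

lemma continuous_mean_zero_subset_L2_0: "continuous_mean_zero \<subseteq> L2_0"
  unfolding continuous_mean_zero_def L2_0_def
  by (auto simp: measurable_on_iff_borel_measurable
      intro!: continuous_imp_measurable_on_sets_lebesgue integrable_continuous_real continuous_intros)

lemma continuous_mean_zero_integrable: "w \<in> continuous_mean_zero \<Longrightarrow> w integrable_on {0..1}"
  unfolding continuous_mean_zero_def by (auto intro: integrable_continuous_real)

lemma continuous_mean_zero_lincomb:
  assumes "w1 \<in> continuous_mean_zero" "w2 \<in> continuous_mean_zero"
  shows "(\<lambda>x. a * w1 x + b * w2 x) \<in> continuous_mean_zero"
  using assms unfolding continuous_mean_zero_def
  by (auto intro!: continuous_intros
      simp: integral_add integrable_continuous_real integrable_on_mult_right)

lemma eq_0_if_orthogonal_to_prims: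
  assumes G: "continuous_on {0..1} G" "integral {0..1} G = 0"
    and orth: "\<And>w. w \<in> continuous_mean_zero \<Longrightarrow> integral {0..1} (\<lambda>t. G t * prim w t) = 0"
    and s: "s \<in> {0..1}"
  shows "G s = 0"
proof -
  let ?\<Gamma> = "\<lambda>t. integral {0..t} G"
  define \<alpha> where "\<alpha> = integral {0..1} ?\<Gamma>"
  have prim_G: "prim G t = ?\<Gamma> t - \<alpha>" for t by (simp add: prim_def \<alpha>_def)
  have G_integrable: "G integrable_on {0..1}" using G(1) by (rule integrable_continuous_real)
  have cont: "continuous_on {0..1} (prim G)" "continuous_on {0..1} ?\<Gamma>"
    using G_integrable by (auto intro: continuous_on_prim indefinite_integral_continuous_1)
  have mean_zero: "prim G \<in> continuous_mean_zero"
    using cont(1) integral_prim[OF G_integrable] by (simp add: continuous_mean_zero_def)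
  have "integral {0..1} (\<lambda>t. (prim G t)^2)
      = integral {0..1} (\<lambda>t. ?\<Gamma> t * prim G t - \<alpha> * prim G t)"
    by (rule integral_cong) (simp add: prim_G power2_eq_square algebra_simps)
  also have "\<dots> = integral {0..1} (\<lambda>t. ?\<Gamma> t * prim G t)"
    using cont integral_prim[OF G_integrable]
    by (subst integral_diff) (auto intro!: integrable_continuous_real continuous_intros)
  also have "\<dots> = 0"
    using integral_mult_prim_by_parts[OF G cont(1)] orth[OF mean_zero] by simp
  finally have "prim G t = 0" if "t \<in> {0..1}" for t
    using continuous_square_integral_eq_0_imp_eq_0[OF cont(1)] that by simp
  then have "?\<Gamma> t = 0" if "t \<in> {0..1}" for t
    using that prim_G[of t] prim_G[of 0] by simp
  then show ?thesis
    using indefinite_integral_eq_0_imp_eq_0[OF G(1)] s by simp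
qed

definition tangent :: "int \<Rightarrow> (real \<Rightarrow> real) \<Rightarrow> real \<Rightarrow> complex" where
  "tangent \<omega> u s = exp (\<i> * complex_of_real (kappa \<omega> * s + prim u s))"

lemma continuous_on_tangent: "u \<in> L2_0 \<Longrightarrow> continuous_on {0..1} (tangent \<omega> u)"
  unfolding tangent_def[abs_def] by (intro continuous_intros continuous_on_prim L2_0_integrable)

lemma closure_map_tangent: "closure_map \<omega> u = integral {0..1} (tangent \<omega> u)"
  unfolding closure_map_def tangent_def ..

lemma D_closure_map_tangent:
  "D_closure_map \<omega> u w = \<i> * integral {0..1} (\<lambda>s. tangent \<omega> u s * complex_of_real (prim w s))"
  unfolding D_closure_map_def tangent_def ..

lemma D_closure_map_lincomb:
  assumes u: "u \<in> L2_0" and w: "w1 integrable_on {0..1}" "w2 integrable_on {0..1}"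
  shows "D_closure_map \<omega> u (\<lambda>x. a * w1 x + b * w2 x)
     = of_real a * D_closure_map \<omega> u w1 + of_real b * D_closure_map \<omega> u w2"
proof -
  have integrable: "(\<lambda>s. tangent \<omega> u s * complex_of_real (prim w s)) integrable_on {0..1}"
    if "w integrable_on {0..1}" for w
    using continuous_on_prim[OF that] continuous_on_tangent[OF u]
    by (intro integrable_continuous_real continuous_intros)
  have "integral {0..1} (\<lambda>s. tangent \<omega> u s * complex_of_real (prim (\<lambda>x. a * w1 x + b * w2 x) s))
      = integral {0..1} (\<lambda>s. of_real a * (tangent \<omega> u s * complex_of_real (prim w1 s))
                          + of_real b * (tangent \<omega> u s * complex_of_real (prim w2 s)))"
    by (rule integral_cong) (simp add: prim_lincomb[OF w] algebra_simps)
  also have "\<dots> = of_real a * integral {0..1} (\<lambda>s. tangent \<omega> u s * complex_of_real (prim w1 s))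
      + of_real b * integral {0..1} (\<lambda>s. tangent \<omega> u s * complex_of_real (prim w2 s))"
    using integrable[OF w(1)] integrable[OF w(2)]
    by (subst integral_add) (auto intro: integrable_on_mult_right)
  finally show ?thesis unfolding D_closure_map_tangent by (simp add: algebra_simps)
qed

lemma subspace_D_closure_map_image:
  assumes u: "u \<in> L2_0"
  shows "subspace (D_closure_map \<omega> u ` continuous_mean_zero)"
  unfolding subspace_def
proof (intro conjI ballI allI)
  have "(\<lambda>_. 0) \<in> continuous_mean_zero" by (simp add: continuous_mean_zero_def)
  moreover have "D_closure_map \<omega> u (\<lambda>_. 0) = 0" by (simp add: D_closure_map_def prim_def)
  ultimately show "0 \<in> D_closure_map \<omega> u ` continuous_mean_zero" by force
next
  fix x y
  assume "x \<in> D_closure_map \<omega> u ` continuous_mean_zero" "y \<in> D_closure_map \<omega> u ` continuous_mean_zero"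
  then obtain w1 w2 where w: "w1 \<in> continuous_mean_zero" "w2 \<in> continuous_mean_zero"
    and "x = D_closure_map \<omega> u w1" "y = D_closure_map \<omega> u w2" by blast
  then have "x + y = D_closure_map \<omega> u (\<lambda>t. 1 * w1 t + 1 * w2 t)"
    using D_closure_map_lincomb[OF u w[THEN continuous_mean_zero_integrable], of \<omega> 1 1] by simp
  then show "x + y \<in> D_closure_map \<omega> u ` continuous_mean_zero"
    using continuous_mean_zero_lincomb[OF w] by blast
next
  fix c x assume "x \<in> D_closure_map \<omega> u ` continuous_mean_zero"
  then obtain w where w: "w \<in> continuous_mean_zero" and "x = D_closure_map \<omega> u w" by blast
  then have "c *\<^sub>R x = D_closure_map \<omega> u (\<lambda>t. c * w t + 0 * w t)"
    using D_closure_map_lincomb[OF u w[THEN continuous_mean_zero_integrable]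
        w[THEN continuous_mean_zero_integrable], of \<omega> c 0]
    by (simp add: scaleR_conv_of_real)
  then show "c *\<^sub>R x \<in> D_closure_map \<omega> u ` continuous_mean_zero"
    using continuous_mean_zero_lincomb[OF w w] by blast
qed

lemma Re_mult_D_closure_map:
  assumes "u \<in> L2_0" "w integrable_on {0..1}"
  shows "Re (c * D_closure_map \<omega> u w)
    = integral {0..1} (\<lambda>s. Re (c * \<i> * tangent \<omega> u s) * prim w s)"
proof -
  let ?f = "\<lambda>s. c * \<i> * tangent \<omega> u s * complex_of_real (prim w s)"
  have "(?f has_integral c * D_closure_map \<omega> u w) {0..1}"
    using continuous_on_prim[OF assms(2)] continuous_on_tangent[OF assms(1)]
    unfolding D_closure_map_tangent
    by (auto simp: mult.assoc intro!: has_integral_mult_right integrable_integral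
        integrable_continuous_real continuous_intros)
  from has_integral_Re[OF this] show ?thesis
    by (simp add: integral_unique)
qed

lemma orthogonal_D_closure_map_image_imp_0:
  assumes u: "u \<in> L2_0" and closed: "closure_map \<omega> u = 0"
    and orth: "\<And>w. w \<in> continuous_mean_zero \<Longrightarrow> orthogonal a (D_closure_map \<omega> u w)"
  shows "a = 0"
proof -
  define G where "G s = Re (cnj a * \<i> * tangent \<omega> u s)" for s
  have "continuous_on {0..1} G"
    unfolding G_def using continuous_on_tangent[OF u] by (intro continuous_intros)
  moreover have "integral {0..1} G = Re (cnj a * \<i> * closure_map \<omega> u)"
    unfolding G_def[abs_def] closure_map_tangent
    by (intro integral_unique has_integral_Re has_integral_mult_right integrable_integral
        integrable_continuous_real continuous_on_tangent u)
  moreover have "integral {0..1} (\<lambda>t. G t * prim w t) = 0" if "w \<in> continuous_mean_zero" for w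
  proof -
    have "integral {0..1} (\<lambda>t. G t * prim w t) = Re (cnj a * D_closure_map \<omega> u w)"
      unfolding G_def using u continuous_mean_zero_integrable[OF that]
      by (rule Re_mult_D_closure_map[symmetric])
    also have "\<dots> = 0"
      using orth[OF that] by (simp add: orthogonal_def inner_complex_def)
    finally show ?thesis .
  qed
  ultimately have G_0: "G s = 0" if "s \<in> {0..1}" for s
    using eq_0_if_orthogonal_to_prims that closed by simp
  have "cnj a * \<i> = 0"
  proof (rule mean_zero_curve_not_on_line[of 0 1 "tangent \<omega> u"])
    show "continuous_on {0..1} (tangent \<omega> u)" by (rule continuous_on_tangent[OF u])
    show "integral {0..1} (tangent \<omega> u) = 0" using closed by (simp add: closure_map_tangent)
  qed (use G_0 in \<open>auto simp: G_def tangent_def\<close>)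
  then show ?thesis by simp
qed

theorem mainTheorem9:
  fixes \<omega> :: int and u :: "real \<Rightarrow> real"
  assumes "\<omega> \<noteq> 0"
    and "u \<in> L2_0"
    and "closure_map \<omega> u = 0"
  shows "\<forall>z::complex. \<exists>w\<in>L2_0. D_closure_map \<omega> u w = z"
proof -
  let ?T = "D_closure_map \<omega> u ` continuous_mean_zero"
  have "?T = UNIV"
  proof (rule ccontr)
    assume "?T \<noteq> UNIV"
    then have "span ?T \<subset> span UNIV"
      using span_eq_iff[THEN iffD2, OF subspace_D_closure_map_image[OF assms(2)]]
      by (metis span_UNIV top.not_eq_extremum)
    then obtain a where "a \<noteq> 0" and "\<And>y. y \<in> span ?T \<Longrightarrow> orthogonal a y"
      using orthogonal_to_subspace_exists_gen by metis
    then show False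
      using orthogonal_D_closure_map_image_imp_0[OF assms(2,3)] span_base by blast
  qed
  then show ?thesis
    using continuous_mean_zero_subset_L2_0 by (metis UNIV_I image_iff subsetD)
qed

end
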